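(* Let $n>0$, $c>1$, and $\tau=\min\{n/2,\ n/c\}$. Consider the following algorithm, executed by each agent: drop a pebble at the initial position, then walk clockwise while measuring the distance travelled; the first time (after time $0$) the agent arrives at a point carrying a pebble, if the distance it has travelled so far is strictly less than $\tau$, it reverses direction and walks anti-clockwise forever; otherwise it continues clockwise forever. In the pebble model, for every initial placement of the two agents, this algorithm achieves rendezvous by time $\max\left\{\frac{n}{2(c-1)},\ \frac{n}{c}\right\}$. In particular, each agent uses only one pebble, dropped once at its initial position.
   Context: Model: the cycle is the continuous circle $\mathbb{R}/n\mathbb{Z}$ of length $n$; it is anonymous. Two agents $A$ and $B$ are placed by an adversary at arbitrary initial points and start at the same time. Both run the same deterministic algorithm; they are identical except that the slower agent $B$ has speed $1$ and the faster agent $A$ has speed $c>1$ (an agent does not know which one it is). Both know $n$ and $c$, share a sense of direction (clockwise vs. anti-clockwise), and have a pedometer measuring the distance they have travelled. Agents detect each other when they are at the same point (rendezvous). Pebble model: an agent may drop a pebble at its current location and can detect whether a pebble lies at its current location (the pebbles of the two agents are indistinguishable). The rendezvous time of an algorithm is the worst case, over all initial placements, of the time until the agents are co-located. *)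

theory Defs
  imports Complex_Main
begin

text \<open>Points of the circle R/nZ are represented by real numbers; two reals denote the
same point of the circle iff they differ by an integer multiple of n.
Clockwise is the direction of increasing reals.\<close>

definition ceq :: "real \<Rightarrow> real \<Rightarrow> real \<Rightarrow> bool" where
  "ceq n x y \<longleftrightarrow> (\<exists>k::int. x - y = of_int k * n)"

definition first_pebble_dist :: "real \<Rightarrow> real set \<Rightarrow> real \<Rightarrow> real" where
  "first_pebble_dist n P p0 = Inf {s. 0 < s \<and> (\<exists>q\<in>P. ceq n (p0 + s) q)}"

definition tau :: "real \<Rightarrow> real \<Rightarrow> real" where
  "tau n c = min (n / 2) (n / c)"

text \<open>Position of an agent following the algorithm, started at p0, with pebbles at the
points of P, after having travelled distance s: clockwise up to the first pebble
(distance d); then anti-clockwise forever if d < tau, else clockwise forever.\<close>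

definition walk :: "real \<Rightarrow> real \<Rightarrow> real set \<Rightarrow> real \<Rightarrow> real \<Rightarrow> real" where
  "walk n c P p0 s =
     (let d = first_pebble_dist n P p0
      in if s \<le> d \<or> tau n c \<le> d then p0 + s else p0 + 2 * d - s)"

end

theory Submission
  imports Defs
begin

text \<open>Write the clockwise offset from a to b as x + m n with 0 \<le> x < n.
If x = 0 the agents start together. Otherwise each agent's first pebble is the other
agent's starting point: A meets it after distance x, B after distance n - x. Since
tau \<le> n/2, at most one agent reverses, giving three cases:
  (1) A reverses (x < tau): the agents approach head-on and meet at time
      (n + x)/(c + 1) \<le> n/c;
  (2) B reverses (n - x < tau): symmetric, meeting at time (2n - x)/(c + 1) \<le> n/c;
  (3) nobody reverses: A catches B from behind at time x/(c - 1), which is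
      n/(2(c - 1)) when c \<le> 2 (then x = n/2) and at most n/c when c > 2.
The file first collects facts about the circle relation ceq and the first-pebble
distance, then evaluates the walk, proves one lemma per case, and combines them.\<close>

lemma ceq_intro:
  fixes n x y :: real and k :: int
  assumes "x - y = of_int k * n"
  shows "ceq n x y"
  using assms unfolding ceq_def by blast

text \<open>A multiple of n greater than -n is nonnegative; this is what makes the
offsets considered below the least positive ones.\<close>
lemma int_multiple_nonneg:
  fixes n :: real and k :: int
  assumes "n > 0" "of_int k * n > - n"
  shows "of_int k * n \<ge> 0"
proof -
  have "of_int k > (-1::real)"
  proof (rule ccontr)
    assume "\<not> of_int k > (-1::real)"
    hence "of_int k * n \<le> -1 * n" using assms(1) by (intro mult_right_mono) auto
    thus False using assms(2) by simp
  qed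
  hence "k \<ge> 0" by simp
  thus ?thesis using assms(1) by simp
qed

lemma clockwise_offset:
  fixes n a b :: real
  assumes "n > 0"
  obtains x :: real and m :: int where "0 \<le> x" "x < n" "b = a + x + of_int m * n"
proof
  define m where "m = floor ((b - a) / n)"
  have "of_int m \<le> (b - a) / n" "(b - a) / n < of_int m + 1" unfolding m_def by linarith+
  hence "of_int m * n \<le> b - a" "b - a < (of_int m + 1) * n" using assms
    by (simp_all add: field_simps)
  thus "0 \<le> b - a - of_int m * n" "b - a - of_int m * n < n" by (simp_all add: algebra_simps)
  show "b = a + (b - a - of_int m * n) + of_int m * n" by simp
qed

text \<open>With pebbles at p0 and at the point p0 + x (0 < x < n), walking clockwise
from p0 one first meets a pebble after distance x: the pebble at p0 is only met
again after distance n.\<close>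
lemma first_pebble_dist_two:
  fixes n x p0 q :: real
  assumes "n > 0" "0 < x" "x < n" "ceq n q (p0 + x)"
  shows "first_pebble_dist n {p0, q} p0 = x"
  unfolding first_pebble_dist_def
proof (rule cInf_eq_minimum)
  obtain j :: int where j: "q - (p0 + x) = of_int j * n" using assms(4) unfolding ceq_def by blast
  have "ceq n (p0 + x) q" by (rule ceq_intro[of _ _ "-j"]) (use j in simp)
  thus "x \<in> {s. 0 < s \<and> (\<exists>q'\<in>{p0, q}. ceq n (p0 + s) q')}" using assms by auto
  fix s assume "s \<in> {s. 0 < s \<and> (\<exists>q'\<in>{p0, q}. ceq n (p0 + s) q')}"
  hence s: "0 < s" and hit: "ceq n (p0 + s) p0 \<or> ceq n (p0 + s) q" by auto
  from hit show "x \<le> s"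
  proof
    assume "ceq n (p0 + s) p0"
    then obtain k :: int where k: "s = of_int k * n" unfolding ceq_def by auto
    have "of_int (k - 1) * n \<ge> 0" using int_multiple_nonneg[OF assms(1), of "k - 1"] k s
      by (simp add: algebra_simps)
    thus ?thesis using k assms(3) by (simp add: algebra_simps)
  next
    assume "ceq n (p0 + s) q"
    then obtain k :: int where k: "p0 + s - q = of_int k * n" unfolding ceq_def by blast
    have e: "s - x = of_int (k + j) * n" using k j by (simp add: algebra_simps)
    have "of_int (k + j) * n \<ge> 0" using int_multiple_nonneg[OF assms(1), of "k + j"] e s assms
      by linarith
    thus ?thesis using e by simp
  qed
qed

lemma first_pebble_dist_nonneg:
  fixes n p0 :: real and P :: "real set"
  assumes "n > 0" "p0 \<in> P"
  shows "first_pebble_dist n P p0 \<ge> 0"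
  unfolding first_pebble_dist_def
proof (rule cInf_greatest)
  have "ceq n (p0 + n) p0" by (rule ceq_intro[of _ _ 1]) simp
  thus "{s. 0 < s \<and> (\<exists>q\<in>P. ceq n (p0 + s) q)} \<noteq> {}" using assms by auto
qed auto

lemma tau_bounds:
  fixes n c :: real
  assumes "n > 0" "c > 1"
  shows "0 < tau n c" "tau n c \<le> n / 2" "c * tau n c \<le> n"
  using assms unfolding tau_def by (auto simp: field_simps min_def)

lemma walk_clockwise:
  assumes "s \<le> first_pebble_dist n P p0 \<or> tau n c \<le> first_pebble_dist n P p0"
  shows "walk n c P p0 s = p0 + s"
  using assms unfolding walk_def Let_def by auto

lemma walk_reversed:
  assumes "first_pebble_dist n P p0 < s" "first_pebble_dist n P p0 < tau n c"
  shows "walk n c P p0 s = p0 + 2 * first_pebble_dist n P p0 - s"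
  using assms unfolding walk_def Let_def by auto

lemma first_pebble_dists:
  fixes n a b x :: real and m :: int
  assumes "n > 0" "0 < x" "x < n" "b = a + x + of_int m * n"
  shows "first_pebble_dist n {a, b} a = x" "first_pebble_dist n {a, b} b = n - x"
proof -
  show "first_pebble_dist n {a, b} a = x"
    by (rule first_pebble_dist_two[OF assms(1-3)]) (rule ceq_intro[of _ _ m], simp add: assms(4))
  have "first_pebble_dist n {b, a} b = n - x"
    by (rule first_pebble_dist_two) (use assms in auto, rule ceq_intro[of _ _ "-m - 1"],
        simp add: assms(4) algebra_simps)
  thus "first_pebble_dist n {a, b} b = n - x" by (simp add: insert_commute)
qed

lemma rendezvous_A_reverses:
  fixes n c a b x :: real and m :: int
  assumes "n > 0" "c > 1" "b = a + x + of_int m * n" "0 < x" "x < tau n c"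
  shows "\<exists>t\<ge>0. t \<le> n / c \<and> ceq n (walk n c {a, b} a (c * t)) (walk n c {a, b} b t)"
proof -
  note tau = tau_bounds[OF assms(1,2)]
  have "c * x < c * tau n c" using assms(2,5) by simp
  hence cx: "c * x < n" using tau(3) by linarith
  have xn: "x < n" using assms(5) tau(2) assms(1) by linarith
  note d = first_pebble_dists[OF assms(1,4) xn assms(3)]
  define t where "t = (x + n) / (c + 1)"
  have t_eq: "x + n = (c + 1) * t" unfolding t_def using assms(2) by simp
  have t_le: "t \<le> n / c" unfolding t_def using cx assms(2) by (simp add: field_simps)
  have t_ge: "0 \<le> t" unfolding t_def using assms(1,2,4) by simp
  have "x < c * n" using xn assms(1,2) by (simp add: less_le_trans)
  hence "x < c * t" unfolding t_def using assms(2) by (simp add: field_simps)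
  hence posA: "walk n c {a, b} a (c * t) = a + 2 * x - c * t"
    using walk_reversed[of n "{a, b}" a "c * t" c] d assms(5) by simp
  have posB: "walk n c {a, b} b t = b + t"
    using walk_clockwise[of t n "{a, b}" b c] d assms(5) tau(2) by simp
  have "ceq n (a + 2 * x - c * t) (b + t)"
    by (rule ceq_intro[of _ _ "-m - 1"]) (use t_eq in \<open>simp add: assms(3) algebra_simps\<close>)
  thus ?thesis using t_le t_ge unfolding posA [symmetric] posB [symmetric] by blast
qed

lemma rendezvous_B_reverses:
  fixes n c a b x :: real and m :: int
  assumes "n > 0" "c > 1" "b = a + x + of_int m * n" "x < n" "n - x < tau n c"
  shows "\<exists>t\<ge>0. t \<le> n / c \<and> ceq n (walk n c {a, b} a (c * t)) (walk n c {a, b} b t)"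
proof -
  note tau = tau_bounds[OF assms(1,2)]
  define y where "y = n - x"
  have "c * y < c * tau n c" using assms(2,5) unfolding y_def by simp
  hence cy: "c * y < n" using tau(3) by linarith
  have x0: "0 < x" using assms(1,5) tau(2) by linarith
  note d = first_pebble_dists[OF assms(1) x0 assms(4,3)]
  define t where "t = (n + y) / (c + 1)"
  have t_eq: "n + y = (c + 1) * t" unfolding t_def using assms(2) by simp
  have t_le: "t \<le> n / c" unfolding t_def using cy assms(2) by (simp add: field_simps)
  have t_ge: "0 \<le> t" unfolding t_def y_def using assms(1,2,4) by simp
  have "y < t" unfolding t_def using assms(2) cy by (simp add: field_simps)
  hence posB: "walk n c {a, b} b t = b + 2 * y - t"
    using walk_reversed[of n "{a, b}" b t c] d assms(5) unfolding y_def by simp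
  have posA: "walk n c {a, b} a (c * t) = a + c * t"
    using walk_clockwise[of "c * t" n "{a, b}" a c] d assms(5) tau(2) by simp
  have "ceq n (a + c * t) (b + 2 * y - t)"
    by (rule ceq_intro[of _ _ "-m"]) (use t_eq in \<open>simp add: assms(3) y_def algebra_simps\<close>)
  thus ?thesis using t_le t_ge unfolding posA [symmetric] posB [symmetric] by blast
qed

lemma rendezvous_no_reversal:
  fixes n c a b x :: real and m :: int
  assumes "n > 0" "c > 1" "b = a + x + of_int m * n" "tau n c \<le> x" "tau n c \<le> n - x"
  shows "\<exists>t\<ge>0. t \<le> max (n / (2 * (c - 1))) (n / c) \<and>
           ceq n (walk n c {a, b} a (c * t)) (walk n c {a, b} b t)"
proof -
  note tau = tau_bounds[OF assms(1,2)]
  have x0: "0 < x" and xn: "x < n" using assms(4,5) tau(1) by linarith+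
  note d = first_pebble_dists[OF assms(1) x0 xn assms(3)]
  define t where "t = x / (c - 1)"
  have t_eq: "x = (c - 1) * t" unfolding t_def using assms(2) by simp
  have t_le: "t \<le> max (n / (2 * (c - 1))) (n / c)"
  proof (cases "c \<le> 2")
    case True
    hence "tau n c = n / 2" unfolding tau_def using assms(1,2) by (simp add: field_simps)
    hence "x = n / 2" using assms(4,5) by linarith
    hence "t = n / (2 * (c - 1))" unfolding t_def using assms(2) by (simp add: field_simps)
    thus ?thesis by simp
  next
    case False
    hence "tau n c = n / c" unfolding tau_def using assms(1) by (simp add: field_simps)
    hence "c * tau n c = n" using assms(2) by simp
    moreover have "c * tau n c \<le> c * (n - x)" using assms(2,5) by simp
    ultimately have "n \<le> c * (n - x)" by linarith
    hence "x * c \<le> n * (c - 1)" by (simp add: algebra_simps)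
    hence "t \<le> n / c" unfolding t_def using assms(2) by (simp add: field_simps)
    thus ?thesis by simp
  qed
  have t_ge: "0 \<le> t" unfolding t_def using x0 assms(2) by simp
  have posA: "walk n c {a, b} a (c * t) = a + c * t"
    using walk_clockwise[of "c * t" n "{a, b}" a c] d assms(4) by simp
  have posB: "walk n c {a, b} b t = b + t"
    using walk_clockwise[of t n "{a, b}" b c] d assms(5) by simp
  have "ceq n (a + c * t) (b + t)"
    by (rule ceq_intro[of _ _ "-m"]) (use t_eq in \<open>simp add: assms(3) algebra_simps\<close>)
  thus ?thesis using t_le t_ge unfolding posA [symmetric] posB [symmetric] by blast
qed

lemma rendezvous_same_start:
  fixes n c a b :: real and m :: int
  assumes "n > 0" "b = a + of_int m * n"
  shows "ceq n (walk n c {a, b} a (c * 0)) (walk n c {a, b} b 0)"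
proof -
  have "walk n c {a, b} a (c * 0) = a" "walk n c {a, b} b 0 = b"
    using walk_clockwise first_pebble_dist_nonneg[OF assms(1)] by auto
  thus ?thesis using assms(2) by (auto intro: ceq_intro[of _ _ "-m"])
qed

theorem theorem3:
  fixes n c a b :: real
  assumes "n > 0" and "c > 1"
  shows "\<exists>t\<ge>0. t \<le> max (n / (2 * (c - 1))) (n / c) \<and>
           ceq n (walk n c {a, b} a (c * t)) (walk n c {a, b} b t)"
proof -
  obtain x :: real and m :: int where x: "0 \<le> x" "x < n" and b: "b = a + x + of_int m * n"
    using clockwise_offset[OF assms(1)] .
  have T0: "0 \<le> max (n / (2 * (c - 1))) (n / c)" using assms by (simp add: max.coboundedI2)
  consider "x = 0" | "0 < x" "x < tau n c" | "n - x < tau n c" | "tau n c \<le> x" "tau n c \<le> n - x"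
    using x by linarith
  then show ?thesis
  proof cases
    case 1
    then have "b = a + of_int m * n" using b by simp
    then show ?thesis using rendezvous_same_start[OF assms(1), of b a m c] T0 by (intro exI[of _ 0]) simp
  next
    case 2
    then show ?thesis using rendezvous_A_reverses[OF assms b] by (meson max.coboundedI2)
  next
    case 3
    then show ?thesis using rendezvous_B_reverses[OF assms b x(2)] by (meson max.coboundedI2)
  next
    case 4
    then show ?thesis by (rule rendezvous_no_reversal[OF assms b])
  qed
qed

end
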